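(* Let $X$ be the two-dimensional cyclic quotient singularity attached to coprime integers $0<q<n$, let $K=-[\rho^0]-[\rho^1]$ be its canonical divisor, and let $D$ and $D'$ be torus invariant Weil divisors on $X$. Then \[ \mathrm{Ext}^1(D,K-D')\;=\;\mathrm{Ext}^1(D',K-D) \] as $M$-graded $R$-modules.
   Context: Fix coprime integers $0<q<n$. Let $N=M=\mathbb Z^2$, paired by the standard scalar product $\langle\cdot,\cdot\rangle$, and $M_{\mathbb Q}=\mathbb Q^2$. Put $\rho^0=(1,0)$, $\rho^1=(-q,n)$, $\sigma=\mathrm{cone}(\rho^0,\rho^1)$ and $\sigma^\vee=\{u\in M_{\mathbb Q}:\langle u,\rho^0\rangle\ge 0,\ \langle u,\rho^1\rangle\ge 0\}$. Let $R=\mathbb C[\sigma^\vee\cap M]$ be the semigroup algebra (monomials $x^u$), an $M$-graded ring, and $X=\mathrm{Spec}\,R$. A torus invariant Weil divisor is $D=a_0[\rho^0]+a_1[\rho^1]$ with $a_0,a_1\in\mathbb Z$ (sums and differences of divisors are taken coefficientwise). Its section polyhedron is $P_D=\{u\in M_{\mathbb Q}:\langle u,\rho^i\rangle\ge -a_i,\ i=0,1\}$ and its module of global sections is the $M$-graded $R$-module $\Gamma(D)=\bigoplus_{u\in P_D\cap M}\mathbb C\,x^u\subseteq\mathbb C[M]$. We write $\mathrm{Ext}^i(D,D')$ for $\mathrm{Ext}^i_R(\Gamma(D),\Gamma(D'))$, with its natural $M$-grading; equality of graded modules means degree-preserving isomorphism. *)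

theory Defs
  imports Complex_Main
begin

type_synonym lat = "int \<times> int"

definition ladd :: "lat \<Rightarrow> lat \<Rightarrow> lat" where
  "ladd u v = (fst u + fst v, snd u + snd v)"

definition lsub :: "lat \<Rightarrow> lat \<Rightarrow> lat" where
  "lsub u v = (fst u - fst v, snd u - snd v)"

definition pair :: "lat \<Rightarrow> lat \<Rightarrow> int" where
  "pair u v = fst u * fst v + snd u * snd v"

definition rho0 :: lat where "rho0 = (1, 0)"
definition rho1 :: "int \<Rightarrow> int \<Rightarrow> lat" where "rho1 q n = (-q, n)"

definition sigma_dual :: "int \<Rightarrow> int \<Rightarrow> lat set" where
  "sigma_dual q n = {u. pair u rho0 \<ge> 0 \<and> pair u (rho1 q n) \<ge> 0}"

text \<open>torus invariant Weil divisors D = a0[rho0] + a1[rho1], encoded as (a0, a1)\<close>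
type_synonym divisor = "int \<times> int"

definition div_sub :: "divisor \<Rightarrow> divisor \<Rightarrow> divisor" where
  "div_sub D E = (fst D - fst E, snd D - snd E)"

definition canonical :: divisor where "canonical = (-1, -1)"

definition sec_poly :: "int \<Rightarrow> int \<Rightarrow> divisor \<Rightarrow> lat set" where
  "sec_poly q n D = {u. pair u rho0 \<ge> - fst D \<and> pair u (rho1 q n) \<ge> - snd D}"

text \<open>an element of C[M] is a finitely supported coefficient function (coefficient of x^u)\<close>
type_synonym elt = "lat \<Rightarrow> complex"

definition supp :: "elt \<Rightarrow> lat set" where "supp f = {u. f u \<noteq> 0}"

definition ezero :: elt where "ezero = (\<lambda>_. 0)"

definition eadd :: "elt \<Rightarrow> elt \<Rightarrow> elt" where "eadd f g = (\<lambda>w. f w + g w)"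

definition esub :: "elt \<Rightarrow> elt \<Rightarrow> elt" where "esub f g = (\<lambda>w. f w - g w)"

definition cmul :: "elt \<Rightarrow> elt \<Rightarrow> elt" where
  "cmul f g = (\<lambda>w. \<Sum>v\<in>supp f. f v * g (lsub w v))"

definition span_on :: "lat set \<Rightarrow> elt set" where
  "span_on S = {f. finite (supp f) \<and> supp f \<subseteq> S}"

definition Rring :: "int \<Rightarrow> int \<Rightarrow> elt set" where
  "Rring q n = span_on (sigma_dual q n)"

definition Gamma :: "int \<Rightarrow> int \<Rightarrow> divisor \<Rightarrow> elt set" where
  "Gamma q n D = span_on (sec_poly q n D)"

definition homog :: "elt \<Rightarrow> lat \<Rightarrow> bool" where "homog f m \<longleftrightarrow> supp f \<subseteq> {m}"

text \<open>The graded free R-module F with basis e_v (v in P_D \<inter> M, deg e_v = v);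
  an element is v \<mapsto> coefficient in R of e_v.  The map F \<rightarrow> Gamma(D) sends e_v to x^v;
  its kernel is the syzygy module K.\<close>
type_synonym fre = "lat \<Rightarrow> elt"

definition free_mod :: "int \<Rightarrow> int \<Rightarrow> divisor \<Rightarrow> fre set" where
  "free_mod q n D = {x. finite {v. x v \<noteq> ezero} \<and> (\<forall>v. x v \<noteq> ezero \<longrightarrow> v \<in> sec_poly q n D)
                        \<and> (\<forall>v. x v \<in> Rring q n)}"

definition free_add :: "fre \<Rightarrow> fre \<Rightarrow> fre" where "free_add x y = (\<lambda>v. eadd (x v) (y v))"

definition free_act :: "elt \<Rightarrow> fre \<Rightarrow> fre" where "free_act r x = (\<lambda>v. cmul r (x v))"

definition free_homog :: "fre \<Rightarrow> lat \<Rightarrow> bool" where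
  "free_homog x m \<longleftrightarrow> (\<forall>v w. x v w \<noteq> 0 \<longrightarrow> ladd v w = m)"

definition augm :: "fre \<Rightarrow> elt" where
  "augm x = (\<lambda>w. \<Sum>v\<in>{v. x v \<noteq> ezero}. x v (lsub w v))"

definition syz :: "int \<Rightarrow> int \<Rightarrow> divisor \<Rightarrow> fre set" where
  "syz q n D = {x \<in> free_mod q n D. augm x = ezero}"

definition fhom :: "int \<Rightarrow> int \<Rightarrow> fre set \<Rightarrow> elt set \<Rightarrow> lat \<Rightarrow> (fre \<Rightarrow> elt) \<Rightarrow> bool" where
  "fhom q n Dom B k \<phi> \<longleftrightarrow>
     (\<forall>x\<in>Dom. \<phi> x \<in> B) \<and>
     (\<forall>x\<in>Dom. \<forall>y\<in>Dom. \<phi> (free_add x y) = eadd (\<phi> x) (\<phi> y)) \<and>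
     (\<forall>r\<in>Rring q n. \<forall>x\<in>Dom. \<phi> (free_act r x) = cmul r (\<phi> x)) \<and>
     (\<forall>x\<in>Dom. \<forall>m. free_homog x m \<longrightarrow> homog (\<phi> x) (ladd m k))"

definition ext1_cocyc :: "int \<Rightarrow> int \<Rightarrow> divisor \<Rightarrow> divisor \<Rightarrow> lat \<Rightarrow> (fre \<Rightarrow> elt) set" where
  "ext1_cocyc q n D D' k = {\<phi>. fhom q n (syz q n D) (Gamma q n D') k \<phi>}"

text \<open>two cocycles define the same class of Ext^1(D,D')_k iff their difference on K
  is the restriction of a degree-k homomorphism F \<rightarrow> Gamma(D')\<close>
definition ext1_rel :: "int \<Rightarrow> int \<Rightarrow> divisor \<Rightarrow> divisor \<Rightarrow> lat \<Rightarrow> (fre \<Rightarrow> elt) \<Rightarrow> (fre \<Rightarrow> elt) \<Rightarrow> bool" where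
  "ext1_rel q n D D' k \<phi> \<psi> \<longleftrightarrow>
     (\<exists>\<chi>. fhom q n (free_mod q n D) (Gamma q n D') k \<chi> \<and>
          (\<forall>x\<in>syz q n D. esub (\<phi> x) (\<psi> x) = \<chi> x))"

definition hadd :: "(fre \<Rightarrow> elt) \<Rightarrow> (fre \<Rightarrow> elt) \<Rightarrow> (fre \<Rightarrow> elt)" where
  "hadd \<phi> \<psi> = (\<lambda>x. eadd (\<phi> x) (\<psi> x))"

definition hact :: "elt \<Rightarrow> (fre \<Rightarrow> elt) \<Rightarrow> (fre \<Rightarrow> elt)" where
  "hact r \<phi> = (\<lambda>x. cmul r (\<phi> x))"

text \<open>Ext^1(D1,D2) and Ext^1(D3,D4) are isomorphic as M-graded R-modules:
  a family of degree-preserving maps on representatives inducing bijections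
  Ext^1(D1,D2)_k \<rightarrow> Ext^1(D3,D4)_k, additive and compatible with the action of
  every homogeneous element of R.\<close>
definition ext1_graded_iso :: "int \<Rightarrow> int \<Rightarrow> divisor \<Rightarrow> divisor \<Rightarrow> divisor \<Rightarrow> divisor \<Rightarrow> bool" where
  "ext1_graded_iso q n D1 D2 D3 D4 \<longleftrightarrow>
    (\<exists>\<Phi> :: lat \<Rightarrow> (fre \<Rightarrow> elt) \<Rightarrow> (fre \<Rightarrow> elt). \<forall>k.
       (\<forall>\<phi>\<in>ext1_cocyc q n D1 D2 k. \<Phi> k \<phi> \<in> ext1_cocyc q n D3 D4 k) \<and>
       (\<forall>\<phi>\<in>ext1_cocyc q n D1 D2 k. \<forall>\<psi>\<in>ext1_cocyc q n D1 D2 k.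
          ext1_rel q n D1 D2 k \<phi> \<psi> \<longleftrightarrow> ext1_rel q n D3 D4 k (\<Phi> k \<phi>) (\<Phi> k \<psi>)) \<and>
       (\<forall>\<chi>\<in>ext1_cocyc q n D3 D4 k. \<exists>\<phi>\<in>ext1_cocyc q n D1 D2 k. ext1_rel q n D3 D4 k (\<Phi> k \<phi>) \<chi>) \<and>
       (\<forall>\<phi>\<in>ext1_cocyc q n D1 D2 k. \<forall>\<psi>\<in>ext1_cocyc q n D1 D2 k.
          ext1_rel q n D3 D4 k (\<Phi> k (hadd \<phi> \<psi>)) (hadd (\<Phi> k \<phi>) (\<Phi> k \<psi>))) \<and>
       (\<forall>u. \<forall>r\<in>Rring q n. homog r u \<longrightarrow>
          (\<forall>\<phi>\<in>ext1_cocyc q n D1 D2 k.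
             ext1_rel q n D3 D4 (ladd k u) (\<Phi> (ladd k u) (hact r \<phi>)) (hact r (\<Phi> k \<phi>)))))"

end

theory Submission
  imports Defs
begin

text \<open>
  Ext^1 is computed from the canonical presentation 0 -> K -> F -> Gamma(D) -> 0.
  Order M by v <= m iff m - v lies in the dual cone; this order is directed, and K is spanned
  by the binomial syzygies x^(m-v) e_v - x^(m-w) e_w for common upper bounds m of v, w in P_D.
  Hence a degree k cocycle K -> Gamma(E) is an additive function T(v, w) on pairs of lattice
  points of P_D which vanishes whenever m + k is not in P_E for a common upper bound m, and it
  is a coboundary iff T(v, w) = a(v) - a(w) with a vanishing on the points v with v + k not in
  P_E.  The complement of P_E - k is the union of two half planes H_0, H_1 (one for each ray),
  each of them directed and downward closed, so T is automatically exact on each.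
  Consequently Ext^1(D, E)_k is one-dimensional, detected by T(p_1, p_0) for p_i in P_D and
  H_i, when P_D meets H_0 and H_1 but not their intersection, and zero otherwise;
  multiplication by a homogeneous r in R acts on this invariant by the scalar r.  For
  E = K - D' the reflection p |-> -p - k turns this condition for (D, K - D') into the one
  for (D', K - D).
\<close>

lemma fst_ladd [simp]: "fst (ladd u v) = fst u + fst v" by (simp add: ladd_def)
lemma snd_ladd [simp]: "snd (ladd u v) = snd u + snd v" by (simp add: ladd_def)
lemma fst_lsub [simp]: "fst (lsub u v) = fst u - fst v" by (simp add: lsub_def)
lemma snd_lsub [simp]: "snd (lsub u v) = snd u - snd v" by (simp add: lsub_def)
lemma ladd_lsub_cancel [simp]: "ladd v (lsub m v) = m" by (simp add: prod_eq_iff)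
lemma lsub_ladd_cancel [simp]: "lsub (ladd v u) v = u" by (simp add: prod_eq_iff)
lemma lsub_ladd_cancel_right [simp]: "lsub (ladd u v) v = u" by (simp add: prod_eq_iff)
lemma lsub_zero_right: "lsub u (0, 0) = u" by (simp add: prod_eq_iff)
lemma lsub_eq_zero_iff: "lsub a b = (0, 0) \<longleftrightarrow> a = b" by (auto simp: prod_eq_iff)
lemma lsub_cancel_right: "lsub a b = lsub c b \<longleftrightarrow> a = c" by (auto simp: prod_eq_iff)
lemma lsub_ladd: "lsub w (ladd v k) = lsub (lsub w k) v" by (simp add: prod_eq_iff)
lemma lsub_commute: "lsub (lsub w a) b = lsub (lsub w b) a" by (simp add: prod_eq_iff)
lemma lsub_eq_lsub_iff: "lsub u s = lsub m v \<longleftrightarrow> u = lsub (ladd m s) v" by (auto simp: prod_eq_iff)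
lemma pair_rho0 [simp]: "pair u rho0 = fst u" by (simp add: pair_def rho0_def)
lemma pair_rho1 [simp]: "pair u (rho1 q n) = - q * fst u + n * snd u" by (simp add: pair_def rho1_def)

lemma le_mult_of_abs_le: "0 < (n::int) \<Longrightarrow> \<bar>c\<bar> \<le> t \<Longrightarrow> c \<le> n * t"
  using mult_right_mono[of 1 n t] by linarith

definition monom :: "complex \<Rightarrow> lat \<Rightarrow> elt" where
  "monom c u = (\<lambda>w. if w = u then c else 0)"

lemma supp_monom: "supp (monom c u) = (if c = 0 then {} else {u})"
  by (auto simp: supp_def monom_def)

lemma cmul_monom: "cmul (monom c u) g = (\<lambda>w. c * g (lsub w u))"
  unfolding cmul_def supp_monom by (rule ext) (simp add: monom_def)

lemma cmul_ezero [simp]: "cmul r ezero = ezero"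
  by (rule ext) (simp add: cmul_def ezero_def)

lemma homog_eq_monom: "homog f m \<Longrightarrow> f = monom (f m) m"
  by (rule ext) (auto simp: homog_def supp_def monom_def)

lemma homog_zero_at_degree: "homog r u \<Longrightarrow> r u = 0 \<Longrightarrow> r = ezero"
  by (auto simp: homog_def supp_def ezero_def fun_eq_iff)

lemma homog_everywhere_imp_zero:
  assumes "\<And>m. homog f m"
  shows "f = ezero"
proof (rule ext)
  fix w
  have "supp f \<subseteq> {w}" "supp f \<subseteq> {ladd w (1, 0)}" using assms by (auto simp: homog_def)
  hence "w \<notin> supp f" by (auto simp: prod_eq_iff)
  thus "f w = ezero w" by (simp add: supp_def ezero_def)
qed

lemma supp_eadd: "supp (eadd f g) \<subseteq> supp f \<union> supp g" by (auto simp: supp_def eadd_def)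
lemma supp_esub: "supp (esub f g) \<subseteq> supp f \<union> supp g" by (auto simp: supp_def esub_def)

lemma span_on_eadd: "f \<in> span_on A \<Longrightarrow> g \<in> span_on A \<Longrightarrow> eadd f g \<in> span_on A"
  using supp_eadd[of f g] by (auto simp: span_on_def intro: finite_subset)
lemma span_on_esub: "f \<in> span_on A \<Longrightarrow> g \<in> span_on A \<Longrightarrow> esub f g \<in> span_on A"
  using supp_esub[of f g] by (auto simp: span_on_def intro: finite_subset)

lemma sum_nonzero_imp_term_nonzero: "(\<Sum>v\<in>W. f v) \<noteq> (0::complex) \<Longrightarrow> \<exists>v\<in>W. f v \<noteq> 0"
  by (meson sum.neutral)

definition free_zero :: fre where "free_zero = (\<lambda>_. ezero)"

definition free_sub :: "fre \<Rightarrow> fre \<Rightarrow> fre" where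
  "free_sub x y = (\<lambda>v. esub (x v) (y v))"

definition free_basis :: "lat \<Rightarrow> fre" where
  "free_basis v = (\<lambda>v'. if v' = v then monom 1 (0, 0) else ezero)"

definition binom_syz :: "complex \<Rightarrow> lat \<Rightarrow> lat \<Rightarrow> lat \<Rightarrow> fre" where
  "binom_syz c v w m =
     free_add (free_act (monom c (lsub m v)) (free_basis v)) (free_act (monom (- c) (lsub m w)) (free_basis w))"

lemma binom_syz_apply:
  "binom_syz c v w m v' u = (if v' = v \<and> u = lsub m v then c else 0) + (if v' = w \<and> u = lsub m w then - c else 0)"
  unfolding binom_syz_def free_add_def free_act_def eadd_def cmul_monom free_basis_def
  by (simp add: monom_def ezero_def lsub_eq_zero_iff)

lemma binom_syz_nonzero:
  assumes "binom_syz c v w m v' u \<noteq> 0"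
  shows "(v' = v \<and> u = lsub m v) \<or> (v' = w \<and> u = lsub m w)"
  using assms unfolding binom_syz_apply by (auto split: if_splits)

lemma binom_syz_support: "{v'. binom_syz c v w m v' \<noteq> ezero} \<subseteq> {v, w}"
  using binom_syz_nonzero[of c v w m] by (fastforce simp: ezero_def fun_eq_iff)

lemma binom_syz_homog: "free_homog (binom_syz c v w m) m"
  unfolding free_homog_def using binom_syz_nonzero by fastforce

lemma binom_syz_scale: "binom_syz c v w m = free_act (monom c (0, 0)) (binom_syz 1 v w m)"
  by (intro ext) (simp add: free_act_def cmul_monom binom_syz_apply lsub_zero_right distrib_left)

lemma binom_syz_shift: "binom_syz 1 v w (ladd m s) = free_act (monom 1 s) (binom_syz 1 v w m)"
  by (intro ext) (simp add: free_act_def cmul_monom binom_syz_apply lsub_eq_lsub_iff)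

lemma binom_syz_chain: "free_add (binom_syz 1 v w m) (binom_syz 1 w u m) = binom_syz 1 v u m"
  by (intro ext) (simp add: free_add_def eadd_def binom_syz_apply)

lemma free_basis_homog: "free_homog (free_basis v) v"
  by (auto simp: free_homog_def free_basis_def monom_def ezero_def prod_eq_iff)

lemma free_add_free_sub_cancel: "free_add (free_sub x y) y = x"
  by (intro ext) (simp add: free_sub_def free_add_def eadd_def esub_def)

lemma free_add_support: "{v. free_add x y v \<noteq> ezero} \<subseteq> {v. x v \<noteq> ezero} \<union> {v. y v \<noteq> ezero}"
  by (auto simp: free_add_def eadd_def ezero_def)
lemma free_sub_support: "{v. free_sub x y v \<noteq> ezero} \<subseteq> {v. x v \<noteq> ezero} \<union> {v. y v \<noteq> ezero}"
  by (auto simp: free_sub_def esub_def ezero_def)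
lemma free_act_support: "{v. free_act r x v \<noteq> ezero} \<subseteq> {v. x v \<noteq> ezero}"
  by (auto simp: free_act_def)

lemma augm_eq_sum_over:
  assumes "finite W" "{v. x v \<noteq> ezero} \<subseteq> W"
  shows "augm x = (\<lambda>w. \<Sum>v\<in>W. x v (lsub w v))"
  unfolding augm_def using assms by (intro ext sum.mono_neutral_left) (auto simp: ezero_def)

lemma augm_free_zero: "augm free_zero = ezero"
  by (rule ext) (simp add: augm_def free_zero_def ezero_def)

lemma augm_binom_syz: "augm (binom_syz c v w m) = ezero"
proof (rule ext)
  fix u
  have "augm (binom_syz c v w m) u = (\<Sum>v'\<in>{v, w}. binom_syz c v w m v' (lsub u v'))"
    by (subst augm_eq_sum_over[OF _ binom_syz_support]) simp_all
  also have "\<dots> = 0"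
    by (cases "v = w") (simp_all add: binom_syz_apply lsub_cancel_right)
  finally show "augm (binom_syz c v w m) u = ezero u" by (simp add: ezero_def)
qed

lemma augm_free_sub:
  assumes "finite {v. x v \<noteq> ezero}" "finite {v. y v \<noteq> ezero}"
  shows "augm (free_sub x y) = esub (augm x) (augm y)"
proof -
  let ?W = "{v. x v \<noteq> ezero} \<union> {v. y v \<noteq> ezero}"
  have "finite ?W" using assms by simp
  from augm_eq_sum_over[OF this free_sub_support] augm_eq_sum_over[OF this, of x]
    augm_eq_sum_over[OF this, of y]
  show ?thesis by (auto simp: free_sub_def esub_def sum_subtractf fun_eq_iff)
qed

definition free_entries :: "fre \<Rightarrow> (lat \<times> lat) set" where
  "free_entries x = {(v, u). x v u \<noteq> 0}"

lemma free_entries_empty_iff: "free_entries x = {} \<longleftrightarrow> x = free_zero"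
  by (auto simp: free_entries_def free_zero_def ezero_def fun_eq_iff)

subsection \<open>The order defined by the dual cone\<close>

locale cyclic_quotient =
  fixes q n :: int
  assumes n_pos: "0 < n"
begin

abbreviation ell1 :: "lat \<Rightarrow> int" where "ell1 u \<equiv> - q * fst u + n * snd u"

lemma sigma_dual_iff: "u \<in> sigma_dual q n \<longleftrightarrow> 0 \<le> fst u \<and> 0 \<le> ell1 u"
  by (simp add: sigma_dual_def)

lemma sec_poly_iff: "u \<in> sec_poly q n D \<longleftrightarrow> - fst D \<le> fst u \<and> - snd D \<le> ell1 u"
  by (simp add: sec_poly_def)

lemma zero_in_sigma_dual: "(0, 0) \<in> sigma_dual q n"
  by (simp add: sigma_dual_iff)

lemma sigma_dual_ladd: "s \<in> sigma_dual q n \<Longrightarrow> t \<in> sigma_dual q n \<Longrightarrow> ladd s t \<in> sigma_dual q n"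
  by (simp add: sigma_dual_iff algebra_simps)

lemma sec_poly_ladd: "u \<in> sec_poly q n D \<Longrightarrow> s \<in> sigma_dual q n \<Longrightarrow> ladd u s \<in> sec_poly q n D"
  by (simp add: sigma_dual_iff sec_poly_iff algebra_simps)

lemma sec_poly_nonempty: "\<exists>p. p \<in> sec_poly q n D"
proof -
  define t where "t = \<bar>snd D\<bar> + \<bar>q * fst D\<bar>"
  have "- snd D - q * fst D \<le> n * t" by (rule le_mult_of_abs_le[OF n_pos]) (auto simp: t_def)
  hence "(- fst D, t) \<in> sec_poly q n D" by (simp add: sec_poly_iff algebra_simps)
  thus ?thesis by blast
qed

definition dominates :: "lat \<Rightarrow> lat \<Rightarrow> bool" where
  "dominates m v \<longleftrightarrow> lsub m v \<in> sigma_dual q n"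

lemma dominates_trans:
  assumes "dominates m' m" "dominates m v"
  shows "dominates m' v"
proof -
  have "ladd (lsub m' m) (lsub m v) = lsub m' v" by (simp add: prod_eq_iff)
  with sigma_dual_ladd assms show ?thesis unfolding dominates_def by metis
qed

lemma dominates_fst_le: "dominates m v \<Longrightarrow> fst v \<le> fst m"
  by (simp add: dominates_def sigma_dual_iff)

lemma dominates_ell1_le: "dominates m v \<Longrightarrow> ell1 v \<le> ell1 m"
  by (simp add: dominates_def sigma_dual_iff algebra_simps)

lemma common_dominator_max_fst:
  "\<exists>m. fst m = max (fst v) (fst w) \<and> dominates m v \<and> dominates m w"
proof -
  define a where "a = max (fst v) (fst w)"
  define b where "b = \<bar>snd v\<bar> + \<bar>snd w\<bar> + \<bar>q * (a - fst v)\<bar> + \<bar>q * (a - fst w)\<bar>"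
  have "q * (a - fst v) \<le> n * (b - snd v)" "q * (a - fst w) \<le> n * (b - snd w)"
    by (rule le_mult_of_abs_le[OF n_pos], simp add: b_def)+
  hence "dominates (a, b) v \<and> dominates (a, b) w"
    by (auto simp: dominates_def sigma_dual_iff a_def algebra_simps)
  thus ?thesis by (intro exI[of _ "(a, b)"]) (simp add: a_def)
qed

lemma common_dominator: "\<exists>m. dominates m v \<and> dominates m w"
  using common_dominator_max_fst by blast

lemma common_dominator_ell1:
  assumes "ell1 v \<le> ell1 w"
  shows "\<exists>m. ell1 m = ell1 w \<and> dominates m v \<and> dominates m w"
proof -
  define t where "t = \<bar>fst w - fst v\<bar>"
  have "fst v - fst w \<le> n * t" "0 \<le> n * t"
    using le_mult_of_abs_le[OF n_pos] n_pos by (auto simp: t_def)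
  moreover define m where "m = (fst w + t * n, snd w + t * q)"
  ultimately show ?thesis using assms
    by (intro exI[of _ m]) (simp add: m_def dominates_def sigma_dual_iff algebra_simps)
qed

lemma common_dominator_max_ell1:
  "\<exists>m. ell1 m = max (ell1 v) (ell1 w) \<and> dominates m v \<and> dominates m w"
  using common_dominator_ell1[of v w] common_dominator_ell1[of w v] by (cases "ell1 v \<le> ell1 w") auto

definition dominator :: "lat \<Rightarrow> lat \<Rightarrow> lat" where
  "dominator v w = (SOME m. dominates m v \<and> dominates m w)"

lemma dominator: "dominates (dominator v w) v" "dominates (dominator v w) w"
  using someI_ex[OF common_dominator[of v w]] unfolding dominator_def by blast+

subsection \<open>Syzygies\<close>

lemma monom_in_Rring: "u \<in> sigma_dual q n \<Longrightarrow> monom c u \<in> Rring q n"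
  by (auto simp: Rring_def span_on_def supp_monom)

lemma ezero_in_Rring: "ezero \<in> Rring q n"
  by (auto simp: Rring_def span_on_def supp_def ezero_def)

lemma Rring_finite_supp: "r \<in> Rring q n \<Longrightarrow> finite (supp r)"
  by (simp add: Rring_def span_on_def)

lemma Rring_supp_sigma_dual: "r \<in> Rring q n \<Longrightarrow> r u \<noteq> 0 \<Longrightarrow> u \<in> sigma_dual q n"
  by (auto simp: Rring_def span_on_def supp_def)

lemma Rring_homogD:
  assumes "r \<in> Rring q n" "homog r u" "r u \<noteq> 0"
  shows "r = monom (r u) u" "u \<in> sigma_dual q n"
  using homog_eq_monom[OF assms(2)] Rring_supp_sigma_dual[OF assms(1,3)] by blast+

lemma free_modD:
  assumes "x \<in> free_mod q n D"
  shows "finite {v. x v \<noteq> ezero}" "x v \<in> Rring q n" "x v \<noteq> ezero \<Longrightarrow> v \<in> sec_poly q n D"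
  using assms unfolding free_mod_def by blast+

lemma free_entries_finite:
  assumes "x \<in> free_mod q n D"
  shows "finite (free_entries x)"
proof (rule finite_subset)
  show "free_entries x \<subseteq> Sigma {v. x v \<noteq> ezero} (\<lambda>v. supp (x v))"
    by (auto simp: free_entries_def supp_def ezero_def)
  show "finite (Sigma {v. x v \<noteq> ezero} (\<lambda>v. supp (x v)))"
    using free_modD[OF assms] by (intro finite_SigmaI Rring_finite_supp)
qed

lemma free_entry_dominates:
  assumes "x \<in> free_mod q n D" "x v u \<noteq> 0"
  shows "dominates (ladd v u) v" "v \<in> sec_poly q n D"
proof -
  show "dominates (ladd v u) v"
    using Rring_supp_sigma_dual[OF free_modD(2)[OF assms(1)] assms(2)] by (simp add: dominates_def)
  have "x v \<noteq> ezero" using assms(2) by (auto simp: ezero_def)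
  thus "v \<in> sec_poly q n D" by (rule free_modD(3)[OF assms(1)])
qed

lemma free_basis_in_free_mod: "v \<in> sec_poly q n D \<Longrightarrow> free_basis v \<in> free_mod q n D"
  by (auto simp: free_mod_def free_basis_def ezero_in_Rring intro!: monom_in_Rring zero_in_sigma_dual)

lemma free_sub_in_free_mod:
  assumes "x \<in> free_mod q n D" "y \<in> free_mod q n D"
  shows "free_sub x y \<in> free_mod q n D"
  unfolding free_mod_def
proof (intro CollectI conjI allI impI)
  show "finite {v. free_sub x y v \<noteq> ezero}"
    using free_modD(1)[OF assms(1)] free_modD(1)[OF assms(2)] by (rule finite_subset[OF free_sub_support, OF finite_UnI])
  show "v \<in> sec_poly q n D" if "free_sub x y v \<noteq> ezero" for v
    using that free_sub_support free_modD(3)[OF assms(1)] free_modD(3)[OF assms(2)] by blast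
  show "free_sub x y v \<in> Rring q n" for v
    using free_modD(2)[OF assms(1)] free_modD(2)[OF assms(2)]
    unfolding free_sub_def Rring_def by (rule span_on_esub)
qed

lemma free_act_monom_in_free_mod:
  assumes s: "s \<in> sigma_dual q n" and x: "x \<in> free_mod q n D"
  shows "free_act (monom c s) x \<in> free_mod q n D"
  unfolding free_mod_def
proof (intro CollectI conjI allI impI)
  show "finite {v. free_act (monom c s) x v \<noteq> ezero}"
    by (rule finite_subset[OF free_act_support free_modD(1)[OF x]])
  show "v \<in> sec_poly q n D" if "free_act (monom c s) x v \<noteq> ezero" for v
    using that free_modD(3)[OF x, of v] by (cases "x v = ezero") (auto simp: free_act_def)
  fix v
  have xv: "x v \<in> Rring q n" by (rule free_modD(2)[OF x])
  have "supp (free_act (monom c s) x v) \<subseteq> (\<lambda>u. ladd u s) ` supp (x v)"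
  proof
    fix w assume "w \<in> supp (free_act (monom c s) x v)"
    hence "lsub w s \<in> supp (x v)" by (simp add: supp_def free_act_def cmul_monom)
    moreover have "w = ladd (lsub w s) s" by (simp add: prod_eq_iff)
    ultimately show "w \<in> (\<lambda>u. ladd u s) ` supp (x v)" by blast
  qed
  moreover have "(\<lambda>u. ladd u s) ` supp (x v) \<subseteq> sigma_dual q n"
    using xv s sigma_dual_ladd unfolding Rring_def span_on_def by blast
  moreover have "finite ((\<lambda>u. ladd u s) ` supp (x v))" using Rring_finite_supp[OF xv] by simp
  ultimately show "free_act (monom c s) x v \<in> Rring q n"
    unfolding Rring_def span_on_def by (auto intro: finite_subset)
qed

lemma free_zero_in_syz: "free_zero \<in> syz q n D"
  unfolding syz_def free_mod_def using augm_free_zero ezero_in_Rring by (simp add: free_zero_def)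

lemma binom_syz_in_syz:
  assumes "v \<in> sec_poly q n D" "w \<in> sec_poly q n D" "dominates m v" "dominates m w"
  shows "binom_syz c v w m \<in> syz q n D"
proof -
  have "binom_syz c v w m v' \<in> Rring q n" for v'
  proof -
    have "supp (binom_syz c v w m v') \<subseteq> {lsub m v, lsub m w}"
      unfolding supp_def using binom_syz_nonzero by blast
    moreover have "{lsub m v, lsub m w} \<subseteq> sigma_dual q n" using assms(3,4) by (auto simp: dominates_def)
    ultimately show ?thesis unfolding Rring_def span_on_def by (auto intro: finite_subset)
  qed
  moreover have "finite {v'. binom_syz c v w m v' \<noteq> ezero}" by (rule finite_subset[OF binom_syz_support]) simp
  moreover have "\<forall>v'. binom_syz c v w m v' \<noteq> ezero \<longrightarrow> v' \<in> sec_poly q n D"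
    using binom_syz_support[of c v w m] assms(1,2) by blast
  ultimately show ?thesis by (simp add: syz_def free_mod_def augm_binom_syz)
qed

lemma syz_free_sub:
  assumes "x \<in> syz q n D" "y \<in> syz q n D"
  shows "free_sub x y \<in> syz q n D"
proof -
  have x: "x \<in> free_mod q n D" "augm x = ezero" and y: "y \<in> free_mod q n D" "augm y = ezero"
    using assms by (simp_all add: syz_def)
  have "augm (free_sub x y) = esub (augm x) (augm y)"
    by (rule augm_free_sub[OF free_modD(1)[OF x(1)] free_modD(1)[OF y(1)]])
  thus ?thesis using free_sub_in_free_mod[OF x(1) y(1)] x(2) y(2)
    by (simp add: syz_def esub_def ezero_def)
qed

lemma syz_cancelling_entry:
  assumes x: "x \<in> syz q n D" and vt: "x v t \<noteq> 0"
  obtains v' where "v' \<noteq> v" "x v' (lsub (ladd v t) v') \<noteq> 0"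
proof -
  define V where "V = {v. x v \<noteq> ezero}"
  have "x \<in> free_mod q n D" using x by (simp add: syz_def)
  hence fV: "finite V" using free_modD(1) by (simp add: V_def)
  have vV: "v \<in> V" using vt by (auto simp: V_def ezero_def)
  have "augm x (ladd v t) = 0" using x by (simp add: syz_def ezero_def)
  hence "(\<Sum>v'\<in>V. x v' (lsub (ladd v t) v')) = 0" unfolding augm_def V_def .
  hence "x v t + (\<Sum>v'\<in>V - {v}. x v' (lsub (ladd v t) v')) = 0"
    using sum.remove[OF fV vV, of "\<lambda>v'. x v' (lsub (ladd v t) v')"] by (simp add: prod_eq_iff)
  hence "(\<Sum>v'\<in>V - {v}. x v' (lsub (ladd v t) v')) \<noteq> 0" using vt by auto
  with sum_nonzero_imp_term_nonzero that show thesis by blast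
qed

lemma free_entries_binom_syz_removed:
  assumes "x v t \<noteq> 0" "v' \<noteq> v" "x v' (lsub (ladd v t) v') \<noteq> 0"
  shows "free_entries (free_sub x (binom_syz (x v t) v v' (ladd v t))) \<subset> free_entries x"
proof -
  let ?b = "binom_syz (x v t) v v' (ladd v t)"
  have "x w u \<noteq> 0" if "x w u - ?b w u \<noteq> 0" for w u
  proof
    assume "x w u = 0"
    with that have "?b w u \<noteq> 0" by simp
    from binom_syz_nonzero[OF this] show False using \<open>x w u = 0\<close> assms by auto
  qed
  moreover have "?b v t = x v t" using assms(2) by (auto simp: binom_syz_apply)
  ultimately have "free_entries (free_sub x ?b) \<subseteq> free_entries x - {(v, t)}"
    by (auto simp: free_entries_def free_sub_def esub_def)
  moreover have "(v, t) \<in> free_entries x" using assms(1) by (simp add: free_entries_def)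
  ultimately show ?thesis by blast
qed

text \<open>Every syzygy is a sum of binomial syzygies: an entry in degree m is cancelled by an entry
  of another component in the same degree, and subtracting the corresponding binomial syzygy
  lowers the number of entries.\<close>

lemma syz_induct [consumes 1, case_names zero binom]:
  assumes "x \<in> syz q n D"
    and zero: "P free_zero"
    and binom: "\<And>x c v w m. x \<in> syz q n D \<Longrightarrow> P x \<Longrightarrow> v \<noteq> w \<Longrightarrow>
                  v \<in> sec_poly q n D \<Longrightarrow> w \<in> sec_poly q n D \<Longrightarrow> dominates m v \<Longrightarrow> dominates m w \<Longrightarrow>
                  P (free_add x (binom_syz c v w m))"
  shows "P x"
  using assms(1)
proof (induction "card (free_entries x)" arbitrary: x rule: less_induct)
  case less
  show ?case
  proof (cases "free_entries x = {}")
    case True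
    thus ?thesis using zero by (simp add: free_entries_empty_iff)
  next
    case False
    then obtain v t where vt: "x v t \<noteq> 0" by (auto simp: free_entries_def)
    obtain v' where v': "v' \<noteq> v" "x v' (lsub (ladd v t) v') \<noteq> 0"
      using syz_cancelling_entry[OF less.prems vt] .
    have xf: "x \<in> free_mod q n D" using less.prems by (simp add: syz_def)
    note dom_v = free_entry_dominates[OF xf vt] and dom_v' = free_entry_dominates[OF xf v'(2)]
    define b where "b = binom_syz (x v t) v v' (ladd v t)"
    have b: "b \<in> syz q n D"
      unfolding b_def using dom_v dom_v' by (intro binom_syz_in_syz) simp_all
    have "card (free_entries (free_sub x b)) < card (free_entries x)"
      unfolding b_def by (rule psubset_card_mono[OF free_entries_finite[OF xf] free_entries_binom_syz_removed[OF vt v']])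
    hence "P (free_sub x b)" using less.hyps syz_free_sub[OF less.prems b] by blast
    hence "P (free_add (free_sub x b) b)"
      unfolding b_def using dom_v dom_v' v'(1) syz_free_sub[OF less.prems b]
      by (intro binom) (simp_all add: b_def)
    thus ?thesis by (simp add: free_add_free_sub_cancel)
  qed
qed

lemma fhomD:
  assumes "fhom q n Dom B k \<phi>"
  shows "\<And>x. x \<in> Dom \<Longrightarrow> \<phi> x \<in> B"
    and "\<And>x y. x \<in> Dom \<Longrightarrow> y \<in> Dom \<Longrightarrow> \<phi> (free_add x y) = eadd (\<phi> x) (\<phi> y)"
    and "\<And>r x. r \<in> Rring q n \<Longrightarrow> x \<in> Dom \<Longrightarrow> \<phi> (free_act r x) = cmul r (\<phi> x)"
    and "\<And>x m. x \<in> Dom \<Longrightarrow> free_homog x m \<Longrightarrow> homog (\<phi> x) (ladd m k)"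
  using assms unfolding fhom_def by blast+

lemma fhom_free_zero:
  assumes "fhom q n Dom B k \<phi>" "free_zero \<in> Dom"
  shows "\<phi> free_zero = ezero"
proof (rule homog_everywhere_imp_zero)
  fix m
  have "free_homog free_zero (lsub m k)" by (simp add: free_homog_def free_zero_def ezero_def)
  from fhomD(4)[OF assms this] show "homog (\<phi> free_zero) m" by (simp add: prod_eq_iff ladd_def)
qed

lemma fhom_zero: "fhom q n Dom (Gamma q n E) k (\<lambda>_. ezero)"
  unfolding fhom_def by (auto simp: Gamma_def span_on_def supp_def homog_def eadd_def ezero_def cmul_def)

lemma fhom_hadd:
  assumes a: "fhom q n Dom (Gamma q n E) k \<phi>" and b: "fhom q n Dom (Gamma q n E) k \<psi>"
  shows "fhom q n Dom (Gamma q n E) k (hadd \<phi> \<psi>)"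
  unfolding fhom_def
proof (intro conjI ballI allI impI)
  fix x assume x: "x \<in> Dom"
  show "hadd \<phi> \<psi> x \<in> Gamma q n E"
    using fhomD(1)[OF a x] fhomD(1)[OF b x] unfolding hadd_def Gamma_def by (rule span_on_eadd)
  fix m assume "free_homog x m"
  thus "homog (hadd \<phi> \<psi> x) (ladd m k)"
    using fhomD(4)[OF a x] fhomD(4)[OF b x] supp_eadd[of "\<phi> x" "\<psi> x"] unfolding homog_def hadd_def by blast
next
  fix x y assume "x \<in> Dom" "y \<in> Dom"
  thus "hadd \<phi> \<psi> (free_add x y) = eadd (hadd \<phi> \<psi> x) (hadd \<phi> \<psi> y)"
    using fhomD(2)[OF a] fhomD(2)[OF b] by (simp add: hadd_def eadd_def fun_eq_iff)
next
  fix r x assume "r \<in> Rring q n" "x \<in> Dom"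
  thus "hadd \<phi> \<psi> (free_act r x) = cmul r (hadd \<phi> \<psi> x)"
    using fhomD(3)[OF a] fhomD(3)[OF b]
    by (simp add: hadd_def eadd_def cmul_def fun_eq_iff sum.distrib distrib_left)
qed

lemma fhom_hact_monom:
  assumes a: "fhom q n Dom (Gamma q n E) k \<phi>" and u: "u \<in> sigma_dual q n"
  shows "fhom q n Dom (Gamma q n E) (ladd k u) (hact (monom c u) \<phi>)"
  unfolding fhom_def
proof (intro conjI ballI allI impI)
  fix x assume x: "x \<in> Dom"
  have f: "\<phi> x \<in> Gamma q n E" by (rule fhomD(1)[OF a x])
  have "supp (hact (monom c u) \<phi> x) \<subseteq> (\<lambda>w. ladd w u) ` supp (\<phi> x)"
  proof
    fix w assume "w \<in> supp (hact (monom c u) \<phi> x)"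
    hence "lsub w u \<in> supp (\<phi> x)" by (simp add: supp_def hact_def cmul_monom)
    moreover have "w = ladd (lsub w u) u" by (simp add: prod_eq_iff)
    ultimately show "w \<in> (\<lambda>w. ladd w u) ` supp (\<phi> x)" by blast
  qed
  moreover have "(\<lambda>w. ladd w u) ` supp (\<phi> x) \<subseteq> sec_poly q n E"
    using f u sec_poly_ladd unfolding Gamma_def span_on_def by blast
  moreover have "finite ((\<lambda>w. ladd w u) ` supp (\<phi> x))" using f by (simp add: Gamma_def span_on_def)
  ultimately show "hact (monom c u) \<phi> x \<in> Gamma q n E"
    unfolding Gamma_def span_on_def by (auto intro: finite_subset)
  fix m assume "free_homog x m"
  hence "homog (\<phi> x) (ladd m k)" by (rule fhomD(4)[OF a x])
  thus "homog (hact (monom c u) \<phi> x) (ladd m (ladd k u))"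
    by (auto simp: homog_def supp_def hact_def cmul_monom prod_eq_iff)
next
  fix x y assume "x \<in> Dom" "y \<in> Dom"
  thus "hact (monom c u) \<phi> (free_add x y) = eadd (hact (monom c u) \<phi> x) (hact (monom c u) \<phi> y)"
    using fhomD(2)[OF a] by (simp add: hact_def eadd_def cmul_monom distrib_left)
next
  fix r x assume "r \<in> Rring q n" "x \<in> Dom"
  hence "\<phi> (free_act r x) = cmul r (\<phi> x)" by (rule fhomD(3)[OF a])
  thus "hact (monom c u) \<phi> (free_act r x) = cmul r (hact (monom c u) \<phi> x)"
    unfolding hact_def cmul_monom
    by (intro ext) (simp add: cmul_def sum_distrib_left lsub_commute mult.left_commute)
qed

lemma hact_ezero: "hact ezero \<phi> = (\<lambda>_. ezero)"
  by (simp add: hact_def cmul_def supp_def ezero_def)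

lemma fhom_hact:
  assumes "fhom q n Dom (Gamma q n E) k \<phi>" "r \<in> Rring q n" "homog r u"
  shows "fhom q n Dom (Gamma q n E) (ladd k u) (hact r \<phi>)"
proof (cases "r u = 0")
  case True
  thus ?thesis using homog_zero_at_degree[OF assms(3)] by (simp add: hact_ezero fhom_zero)
next
  case False
  with Rring_homogD[OF assms(2,3)] fhom_hact_monom[OF assms(1)] show ?thesis by metis
qed

text \<open>The homomorphism F -> C[M] of degree k sending e_v to a(v) x^(v+k).\<close>

definition basis_hom :: "lat \<Rightarrow> (lat \<Rightarrow> complex) \<Rightarrow> fre \<Rightarrow> elt" where
  "basis_hom k a x = (\<lambda>w. \<Sum>v\<in>{v. x v \<noteq> ezero}. a v * x v (lsub w (ladd v k)))"

lemma basis_hom_eq_sum_over: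
  assumes "finite W" "{v. x v \<noteq> ezero} \<subseteq> W"
  shows "basis_hom k a x = (\<lambda>w. \<Sum>v\<in>W. a v * x v (lsub w (ladd v k)))"
  unfolding basis_hom_def using assms by (intro ext sum.mono_neutral_left) (auto simp: ezero_def)

lemma basis_hom_free_zero: "basis_hom k a free_zero = ezero"
  by (rule ext) (simp add: basis_hom_def free_zero_def ezero_def)

lemma basis_hom_free_add:
  assumes "x \<in> free_mod q n D" "y \<in> free_mod q n D"
  shows "basis_hom k a (free_add x y) = eadd (basis_hom k a x) (basis_hom k a y)"
proof -
  let ?W = "{v. x v \<noteq> ezero} \<union> {v. y v \<noteq> ezero}"
  have f: "finite ?W" using assms free_modD(1) by blast
  have "basis_hom k a x = (\<lambda>w. \<Sum>v\<in>?W. a v * x v (lsub w (ladd v k)))"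
    "basis_hom k a y = (\<lambda>w. \<Sum>v\<in>?W. a v * y v (lsub w (ladd v k)))"
    by (rule basis_hom_eq_sum_over[OF f], blast)+
  thus ?thesis unfolding basis_hom_eq_sum_over[OF f free_add_support]
    by (simp add: eadd_def free_add_def sum.distrib distrib_left)
qed

lemma basis_hom_free_act:
  assumes "x \<in> free_mod q n D"
  shows "basis_hom k a (free_act r x) = cmul r (basis_hom k a x)"
proof (rule ext)
  fix w
  let ?W = "{v. x v \<noteq> ezero}"
  have f: "finite ?W" using assms by (rule free_modD(1))
  have "basis_hom k a (free_act r x) w
      = (\<Sum>v\<in>?W. \<Sum>t\<in>supp r. r t * (a v * x v (lsub (lsub w t) (ladd v k))))"
    unfolding basis_hom_eq_sum_over[OF f free_act_support]
    by (simp add: free_act_def cmul_def sum_distrib_left lsub_commute mult.left_commute)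
  also have "\<dots> = (\<Sum>t\<in>supp r. \<Sum>v\<in>?W. r t * (a v * x v (lsub (lsub w t) (ladd v k))))"
    by (rule sum.swap)
  also have "\<dots> = cmul r (basis_hom k a x) w"
    by (simp add: cmul_def basis_hom_def sum_distrib_left)
  finally show "basis_hom k a (free_act r x) w = cmul r (basis_hom k a x) w" .
qed

lemma basis_hom_nonzero:
  assumes "basis_hom k a x w \<noteq> 0"
  obtains v where "x v \<noteq> ezero" "a v \<noteq> 0" "x v (lsub w (ladd v k)) \<noteq> 0"
proof -
  from assms obtain v where "v \<in> {v. x v \<noteq> ezero}" "a v * x v (lsub w (ladd v k)) \<noteq> 0"
    unfolding basis_hom_def by (blast dest: sum_nonzero_imp_term_nonzero)
  with that show thesis by simp
qed

lemma basis_hom_homog: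
  assumes "free_homog x m"
  shows "homog (basis_hom k a x) (ladd m k)"
  unfolding homog_def
proof
  fix w assume "w \<in> supp (basis_hom k a x)"
  then obtain v where "x v (lsub w (ladd v k)) \<noteq> 0"
    by (auto simp: supp_def elim: basis_hom_nonzero)
  hence "ladd v (lsub w (ladd v k)) = m" using assms unfolding free_homog_def by blast
  thus "w \<in> {ladd m k}" by (auto simp: prod_eq_iff)
qed

lemma basis_hom_binom_syz:
  assumes "v \<noteq> w"
  shows "basis_hom k a (binom_syz c v w m) = monom (c * (a v - a w)) (ladd m k)"
proof -
  have e: "lsub (ladd m k) (ladd v' k) = lsub m v'" for v' by (simp add: prod_eq_iff)
  have "basis_hom k a (binom_syz c v w m) (ladd m k) = c * (a v - a w)"
    unfolding basis_hom_eq_sum_over[OF _ binom_syz_support, simplified] e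
    using assms by (simp add: binom_syz_apply algebra_simps)
  with homog_eq_monom[OF basis_hom_homog[OF binom_syz_homog]] show ?thesis by metis
qed

lemma basis_hom_finite_supp:
  assumes "x \<in> free_mod q n D"
  shows "finite (supp (basis_hom k a x))"
proof (rule finite_subset)
  let ?U = "\<Union>v\<in>{v. x v \<noteq> ezero}. (\<lambda>u. ladd u (ladd v k)) ` supp (x v)"
  show "finite ?U" using free_modD[OF assms] by (auto intro!: Rring_finite_supp)
  show "supp (basis_hom k a x) \<subseteq> ?U"
  proof
    fix w assume "w \<in> supp (basis_hom k a x)"
    then obtain v where v: "x v \<noteq> ezero" "lsub w (ladd v k) \<in> supp (x v)"
      by (auto simp: supp_def elim: basis_hom_nonzero)
    have "w = ladd (lsub w (ladd v k)) (ladd v k)" by (simp add: prod_eq_iff)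
    with v show "w \<in> ?U" by blast
  qed
qed

lemma basis_hom_in_Gamma:
  assumes x: "x \<in> free_mod q n D" and a: "\<forall>v\<in>sec_poly q n D. ladd v k \<notin> sec_poly q n E \<longrightarrow> a v = 0"
  shows "basis_hom k a x \<in> Gamma q n E"
proof -
  have "w \<in> sec_poly q n E" if "w \<in> supp (basis_hom k a x)" for w
  proof -
    from that have "basis_hom k a x w \<noteq> 0" by (simp add: supp_def)
    then obtain v where v: "x v \<noteq> ezero" "a v \<noteq> 0" "x v (lsub w (ladd v k)) \<noteq> 0"
      by (rule basis_hom_nonzero)
    have "ladd v k \<in> sec_poly q n E" using a v(2) free_modD(3)[OF x v(1)] by blast
    moreover have "lsub w (ladd v k) \<in> sigma_dual q n"
      using Rring_supp_sigma_dual[OF free_modD(2)[OF x] v(3)] .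
    ultimately show ?thesis using sec_poly_ladd by fastforce
  qed
  thus ?thesis using basis_hom_finite_supp[OF x] by (auto simp: Gamma_def span_on_def)
qed

text \<open>On syzygies a weaker condition suffices: in a degree m + k outside P_E the weight only
  has to be constant on the components dominated by m, since the coefficients of a syzygy in
  each degree sum to zero.\<close>

lemma basis_hom_syz_in_Gamma:
  assumes x: "x \<in> syz q n D"
    and a: "\<And>m. ladd m k \<notin> sec_poly q n E \<Longrightarrow> \<exists>c. \<forall>v\<in>sec_poly q n D. dominates m v \<longrightarrow> a v = c"
  shows "basis_hom k a x \<in> Gamma q n E"
proof -
  have xf: "x \<in> free_mod q n D" and au: "augm x = ezero" using x by (auto simp: syz_def)
  have "basis_hom k a x (ladd m k) = 0" if "ladd m k \<notin> sec_poly q n E" for m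
  proof -
    from a[OF that] obtain c where c: "\<forall>v\<in>sec_poly q n D. dominates m v \<longrightarrow> a v = c" by blast
    have const: "a v * x v (lsub m v) = c * x v (lsub m v)" for v
      using c free_entry_dominates[OF xf, of v "lsub m v"] by (cases "x v (lsub m v) = 0") auto
    have "basis_hom k a x (ladd m k) = (\<Sum>v\<in>{v. x v \<noteq> ezero}. c * x v (lsub m v))"
      unfolding basis_hom_def lsub_ladd by (simp only: const lsub_ladd_cancel_right)
    also have "\<dots> = c * augm x m" by (simp add: augm_def sum_distrib_left)
    finally show ?thesis using au by (simp add: ezero_def)
  qed
  hence "supp (basis_hom k a x) \<subseteq> sec_poly q n E"
    by (auto simp: supp_def) (metis ladd_lsub_cancel lsub_ladd_cancel ladd_def add.commute)
  thus ?thesis using basis_hom_finite_supp[OF xf] by (simp add: Gamma_def span_on_def)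
qed

lemma basis_hom_fhom_free:
  assumes "\<forall>v\<in>sec_poly q n D. ladd v k \<notin> sec_poly q n E \<longrightarrow> a v = 0"
  shows "fhom q n (free_mod q n D) (Gamma q n E) k (basis_hom k a)"
  unfolding fhom_def using assms
  by (auto intro: basis_hom_in_Gamma basis_hom_free_add basis_hom_free_act basis_hom_homog)

lemma basis_hom_fhom_syz:
  assumes "\<And>m. ladd m k \<notin> sec_poly q n E \<Longrightarrow> \<exists>c. \<forall>v\<in>sec_poly q n D. dominates m v \<longrightarrow> a v = c"
  shows "fhom q n (syz q n D) (Gamma q n E) k (basis_hom k a)"
  unfolding fhom_def using assms
  by (auto simp: syz_def intro: basis_hom_syz_in_Gamma basis_hom_free_add basis_hom_free_act basis_hom_homog)

subsection \<open>Cocycles as functions on pairs of lattice points\<close>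

definition syz_coeff :: "(fre \<Rightarrow> elt) \<Rightarrow> lat \<Rightarrow> lat \<Rightarrow> lat \<Rightarrow> lat \<Rightarrow> complex" where
  "syz_coeff \<phi> k v w m = \<phi> (binom_syz 1 v w m) (ladd m k)"

lemma syz_coeff_hact_monom:
  "syz_coeff (hact (monom c u) \<phi>) (ladd k u) v w m = c * syz_coeff \<phi> k v w m"
proof -
  have "lsub (ladd m (ladd k u)) u = ladd m k" by (simp add: prod_eq_iff)
  thus ?thesis by (simp add: syz_coeff_def hact_def cmul_monom)
qed

context
  fixes D E :: divisor and k :: lat and \<phi> :: "fre \<Rightarrow> elt"
  assumes cocycle: "fhom q n (syz q n D) (Gamma q n E) k \<phi>"
begin

lemma cocycle_binom_syz:
  assumes "v \<in> sec_poly q n D" "w \<in> sec_poly q n D" "dominates m v" "dominates m w"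
  shows "\<phi> (binom_syz c v w m) = monom (c * syz_coeff \<phi> k v w m) (ladd m k)"
proof -
  have b: "binom_syz 1 v w m \<in> syz q n D" using assms by (rule binom_syz_in_syz)
  have "\<phi> (binom_syz c v w m) = cmul (monom c (0, 0)) (\<phi> (binom_syz 1 v w m))"
    unfolding binom_syz_scale[of c] by (rule fhomD(3)[OF cocycle monom_in_Rring[OF zero_in_sigma_dual] b])
  also have "\<phi> (binom_syz 1 v w m) = monom (syz_coeff \<phi> k v w m) (ladd m k)"
    unfolding syz_coeff_def by (rule homog_eq_monom, rule fhomD(4)[OF cocycle b binom_syz_homog])
  finally show ?thesis unfolding cmul_monom by (auto simp: monom_def lsub_zero_right)
qed

lemma syz_coeff_shift:
  assumes "v \<in> sec_poly q n D" "w \<in> sec_poly q n D" "dominates m v" "dominates m w" "s \<in> sigma_dual q n"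
  shows "syz_coeff \<phi> k v w (ladd m s) = syz_coeff \<phi> k v w m"
proof -
  have b: "binom_syz 1 v w m \<in> syz q n D" using assms(1-4) by (rule binom_syz_in_syz)
  have "\<phi> (binom_syz 1 v w (ladd m s)) = cmul (monom 1 s) (\<phi> (binom_syz 1 v w m))"
    unfolding binom_syz_shift by (rule fhomD(3)[OF cocycle monom_in_Rring[OF assms(5)] b])
  moreover have "lsub (ladd (ladd m s) k) s = ladd m k" by (simp add: prod_eq_iff)
  ultimately show ?thesis unfolding syz_coeff_def by (simp add: cmul_monom)
qed

lemma syz_coeff_indep:
  assumes "v \<in> sec_poly q n D" "w \<in> sec_poly q n D"
    and "dominates m v" "dominates m w" "dominates m' v" "dominates m' w"
  shows "syz_coeff \<phi> k v w m = syz_coeff \<phi> k v w m'"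
proof -
  obtain M where M: "dominates M m" "dominates M m'" using common_dominator by blast
  have "syz_coeff \<phi> k v w M = syz_coeff \<phi> k v w m"
    using syz_coeff_shift[OF assms(1-4), of "lsub M m"] M(1) by (simp add: dominates_def)
  moreover have "syz_coeff \<phi> k v w M = syz_coeff \<phi> k v w m'"
    using syz_coeff_shift[OF assms(1,2,5,6), of "lsub M m'"] M(2) by (simp add: dominates_def)
  ultimately show ?thesis by simp
qed

lemma syz_coeff_chain:
  assumes "v \<in> sec_poly q n D" "w \<in> sec_poly q n D" "u \<in> sec_poly q n D"
    and "dominates m v" "dominates m w" "dominates m u"
  shows "syz_coeff \<phi> k v w m + syz_coeff \<phi> k w u m = syz_coeff \<phi> k v u m"
proof -
  have "binom_syz 1 v w m \<in> syz q n D" "binom_syz 1 w u m \<in> syz q n D"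
    using assms by (auto intro: binom_syz_in_syz)
  from fhomD(2)[OF cocycle this] show ?thesis
    unfolding syz_coeff_def binom_syz_chain by (simp add: eadd_def)
qed

lemma syz_coeff_outside:
  assumes "v \<in> sec_poly q n D" "w \<in> sec_poly q n D" "dominates m v" "dominates m w"
    and "ladd m k \<notin> sec_poly q n E"
  shows "syz_coeff \<phi> k v w m = 0"
proof -
  have "binom_syz 1 v w m \<in> syz q n D" using assms(1-4) by (rule binom_syz_in_syz)
  from fhomD(1)[OF cocycle this] have "supp (\<phi> (binom_syz 1 v w m)) \<subseteq> sec_poly q n E"
    by (simp add: Gamma_def span_on_def)
  thus ?thesis unfolding syz_coeff_def using assms(5) by (auto simp: supp_def)
qed

end

definition syz_cocycle :: "divisor \<Rightarrow> divisor \<Rightarrow> lat \<Rightarrow> (lat \<Rightarrow> lat \<Rightarrow> lat \<Rightarrow> complex) \<Rightarrow> bool" where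
  "syz_cocycle D E k \<Delta> \<longleftrightarrow>
    (\<forall>v\<in>sec_poly q n D. \<forall>w\<in>sec_poly q n D. \<forall>m m'.
       dominates m v \<longrightarrow> dominates m w \<longrightarrow> dominates m' v \<longrightarrow> dominates m' w \<longrightarrow> \<Delta> v w m = \<Delta> v w m') \<and>
    (\<forall>v\<in>sec_poly q n D. \<forall>w\<in>sec_poly q n D. \<forall>u\<in>sec_poly q n D. \<forall>m.
       dominates m v \<longrightarrow> dominates m w \<longrightarrow> dominates m u \<longrightarrow> \<Delta> v w m + \<Delta> w u m = \<Delta> v u m) \<and>
    (\<forall>v\<in>sec_poly q n D. \<forall>w\<in>sec_poly q n D. \<forall>m.
       dominates m v \<longrightarrow> dominates m w \<longrightarrow> ladd m k \<notin> sec_poly q n E \<longrightarrow> \<Delta> v w m = 0)"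

lemma syz_cocycleD:
  assumes "syz_cocycle D E k \<Delta>" "v \<in> sec_poly q n D" "w \<in> sec_poly q n D"
  shows "dominates m v \<Longrightarrow> dominates m w \<Longrightarrow> dominates m' v \<Longrightarrow> dominates m' w \<Longrightarrow> \<Delta> v w m = \<Delta> v w m'"
    and "u \<in> sec_poly q n D \<Longrightarrow> dominates m v \<Longrightarrow> dominates m w \<Longrightarrow> dominates m u \<Longrightarrow>
           \<Delta> v w m + \<Delta> w u m = \<Delta> v u m"
    and "dominates m v \<Longrightarrow> dominates m w \<Longrightarrow> ladd m k \<notin> sec_poly q n E \<Longrightarrow> \<Delta> v w m = 0"
  using assms unfolding syz_cocycle_def by blast+

lemma syz_cocycle_syz_coeff:
  assumes "fhom q n (syz q n D) (Gamma q n E) k \<phi>"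
  shows "syz_cocycle D E k (syz_coeff \<phi> k)"
  unfolding syz_cocycle_def
  by (intro conjI ballI allI impI syz_coeff_indep[OF assms] syz_coeff_chain[OF assms] syz_coeff_outside[OF assms])

lemma syz_cocycle_diff:
  assumes "syz_cocycle D E k \<Delta>1" "syz_cocycle D E k \<Delta>2"
  shows "syz_cocycle D E k (\<lambda>v w m. \<Delta>1 v w m - \<Delta>2 v w m)"
  unfolding syz_cocycle_def
proof (intro conjI ballI allI impI)
  fix v w u m assume "v \<in> sec_poly q n D" "w \<in> sec_poly q n D" "u \<in> sec_poly q n D"
    "dominates m v" "dominates m w" "dominates m u"
  from syz_cocycleD(2)[OF assms(1) this] syz_cocycleD(2)[OF assms(2) this]
  show "\<Delta>1 v w m - \<Delta>2 v w m + (\<Delta>1 w u m - \<Delta>2 w u m) = \<Delta>1 v u m - \<Delta>2 v u m"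
    by (simp add: algebra_simps)
next
  fix v w m m' assume "v \<in> sec_poly q n D" "w \<in> sec_poly q n D"
    "dominates m v" "dominates m w" "dominates m' v" "dominates m' w"
  from syz_cocycleD(1)[OF assms(1) this] syz_cocycleD(1)[OF assms(2) this]
  show "\<Delta>1 v w m - \<Delta>2 v w m = \<Delta>1 v w m' - \<Delta>2 v w m'" by simp
next
  fix v w m assume "v \<in> sec_poly q n D" "w \<in> sec_poly q n D"
    "dominates m v" "dominates m w" "ladd m k \<notin> sec_poly q n E"
  from syz_cocycleD(3)[OF assms(1) this] syz_cocycleD(3)[OF assms(2) this]
  show "\<Delta>1 v w m - \<Delta>2 v w m = 0" by simp
qed

definition outside0 :: "divisor \<Rightarrow> lat \<Rightarrow> lat \<Rightarrow> bool" where
  "outside0 E k m \<longleftrightarrow> fst (ladd m k) < - fst E"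

definition outside1 :: "divisor \<Rightarrow> lat \<Rightarrow> lat \<Rightarrow> bool" where
  "outside1 E k m \<longleftrightarrow> ell1 (ladd m k) < - snd E"

lemma not_in_sec_poly_iff: "ladd m k \<notin> sec_poly q n E \<longleftrightarrow> outside0 E k m \<or> outside1 E k m"
  unfolding sec_poly_iff outside0_def outside1_def by linarith

lemma outside0_dominated: "dominates m v \<Longrightarrow> outside0 E k m \<Longrightarrow> outside0 E k v"
  using dominates_fst_le[of m v] by (simp add: outside0_def)

lemma outside1_dominated: "dominates m v \<Longrightarrow> outside1 E k m \<Longrightarrow> outside1 E k v"
  using dominates_ell1_le[of m v] by (simp add: outside1_def algebra_simps)

lemma outside0_common_dominator:
  assumes "outside0 E k v" "outside0 E k w"
  obtains m where "dominates m v" "dominates m w" "outside0 E k m"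
  using common_dominator_max_fst[of v w] assms by (auto simp: outside0_def max_def)

lemma outside1_common_dominator:
  assumes "outside1 E k v" "outside1 E k w"
  obtains m where "dominates m v" "dominates m w" "outside1 E k m"
  using common_dominator_max_ell1[of v w] assms by (auto simp: outside1_def max_def algebra_simps)

lemma outside0_shift: "u \<in> sigma_dual q n \<Longrightarrow> outside0 E (ladd k u) m \<Longrightarrow> outside0 E k m"
  by (simp add: outside0_def sigma_dual_iff)

lemma outside1_shift: "u \<in> sigma_dual q n \<Longrightarrow> outside1 E (ladd k u) m \<Longrightarrow> outside1 E k m"
  by (simp add: outside1_def sigma_dual_iff algebra_simps)

subsection \<open>Exactness of cocycles\<close>

definition ext1_nonvanishing :: "divisor \<Rightarrow> divisor \<Rightarrow> lat \<Rightarrow> bool" where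
  "ext1_nonvanishing D E k \<longleftrightarrow>
     (\<exists>p\<in>sec_poly q n D. outside0 E k p) \<and> (\<exists>p\<in>sec_poly q n D. outside1 E k p) \<and>
     \<not> (\<exists>p\<in>sec_poly q n D. outside0 E k p \<and> outside1 E k p)"

definition witness0 :: "divisor \<Rightarrow> divisor \<Rightarrow> lat \<Rightarrow> lat" where
  "witness0 D E k = (SOME p. p \<in> sec_poly q n D \<and> outside0 E k p)"

definition witness1 :: "divisor \<Rightarrow> divisor \<Rightarrow> lat \<Rightarrow> lat" where
  "witness1 D E k = (SOME p. p \<in> sec_poly q n D \<and> outside1 E k p)"

lemma ext1_nonvanishing_witnesses:
  assumes "ext1_nonvanishing D E k"
  shows "witness0 D E k \<in> sec_poly q n D" "outside0 E k (witness0 D E k)" "\<not> outside1 E k (witness0 D E k)"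
    and "witness1 D E k \<in> sec_poly q n D" "outside1 E k (witness1 D E k)" "\<not> outside0 E k (witness1 D E k)"
proof -
  have "\<exists>p. p \<in> sec_poly q n D \<and> outside0 E k p" "\<exists>p. p \<in> sec_poly q n D \<and> outside1 E k p"
    using assms unfolding ext1_nonvanishing_def by blast+
  from someI_ex[OF this(1)] someI_ex[OF this(2)] assms
  show "witness0 D E k \<in> sec_poly q n D" "outside0 E k (witness0 D E k)" "\<not> outside1 E k (witness0 D E k)"
    "witness1 D E k \<in> sec_poly q n D" "outside1 E k (witness1 D E k)" "\<not> outside0 E k (witness1 D E k)"
    unfolding witness0_def witness1_def ext1_nonvanishing_def by blast+
qed

definition cocycle_value :: "(lat \<Rightarrow> lat \<Rightarrow> lat \<Rightarrow> complex) \<Rightarrow> lat \<Rightarrow> lat \<Rightarrow> complex" where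
  "cocycle_value \<Delta> v w = \<Delta> v w (dominator v w)"

context
  fixes D E :: divisor and k :: lat and \<Delta> :: "lat \<Rightarrow> lat \<Rightarrow> lat \<Rightarrow> complex"
  assumes cocycle: "syz_cocycle D E k \<Delta>"
begin

lemma cocycle_value_eq:
  "v \<in> sec_poly q n D \<Longrightarrow> w \<in> sec_poly q n D \<Longrightarrow> dominates m v \<Longrightarrow> dominates m w \<Longrightarrow>
     \<Delta> v w m = cocycle_value \<Delta> v w"
  unfolding cocycle_value_def using syz_cocycleD(1)[OF cocycle _ _ _ _ dominator] by blast

lemma cocycle_value_chain:
  assumes "v \<in> sec_poly q n D" "w \<in> sec_poly q n D" "u \<in> sec_poly q n D"
  shows "cocycle_value \<Delta> v w + cocycle_value \<Delta> w u = cocycle_value \<Delta> v u"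
proof -
  obtain m where m: "dominates m v" "dominates m (dominator w u)" using common_dominator by blast
  have "dominates m w" "dominates m u" using dominates_trans[OF m(2)] dominator by blast+
  with syz_cocycleD(2)[OF cocycle assms(1,2,3) m(1)] show ?thesis
    using cocycle_value_eq assms m(1) by metis
qed

lemma cocycle_value_antisym:
  "v \<in> sec_poly q n D \<Longrightarrow> w \<in> sec_poly q n D \<Longrightarrow> cocycle_value \<Delta> v w = - cocycle_value \<Delta> w v"
  using cocycle_value_chain[of v w v] cocycle_value_chain[of v v v] by (simp add: eq_neg_iff_add_eq_0)

lemma cocycle_value_outside0:
  assumes "v \<in> sec_poly q n D" "w \<in> sec_poly q n D" "outside0 E k v" "outside0 E k w"
  shows "cocycle_value \<Delta> v w = 0"
proof -
  obtain m where m: "dominates m v" "dominates m w" "outside0 E k m"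
    using outside0_common_dominator[OF assms(3,4)] .
  hence "\<Delta> v w m = 0" using syz_cocycleD(3)[OF cocycle assms(1,2)] by (simp add: not_in_sec_poly_iff)
  thus ?thesis using cocycle_value_eq[OF assms(1,2) m(1,2)] by simp
qed

lemma cocycle_value_outside1:
  assumes "v \<in> sec_poly q n D" "w \<in> sec_poly q n D" "outside1 E k v" "outside1 E k w"
  shows "cocycle_value \<Delta> v w = 0"
proof -
  obtain m where m: "dominates m v" "dominates m w" "outside1 E k m"
    using outside1_common_dominator[OF assms(3,4)] .
  hence "\<Delta> v w m = 0" using syz_cocycleD(3)[OF cocycle assms(1,2)] by (simp add: not_in_sec_poly_iff)
  thus ?thesis using cocycle_value_eq[OF assms(1,2) m(1,2)] by simp
qed

text \<open>When P_D meets only one half plane, or their intersection, any point there is a base point;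
  otherwise the hypothesis on the witnesses joins the two half planes.\<close>

lemma cocycle_base_point:
  assumes "ext1_nonvanishing D E k \<Longrightarrow> cocycle_value \<Delta> (witness1 D E k) (witness0 D E k) = 0"
  obtains b where "b \<in> sec_poly q n D"
    "\<And>v. v \<in> sec_poly q n D \<Longrightarrow> outside0 E k v \<or> outside1 E k v \<Longrightarrow> cocycle_value \<Delta> v b = 0"
proof -
  consider (both) b where "b \<in> sec_poly q n D" "outside0 E k b" "outside1 E k b"
    | (nonvanishing) "ext1_nonvanishing D E k"
    | (no0) "\<not> (\<exists>p\<in>sec_poly q n D. outside0 E k p)"
    | (no1) "\<not> (\<exists>p\<in>sec_poly q n D. outside1 E k p)"
    unfolding ext1_nonvanishing_def by blast
  thus thesis
  proof cases
    case both
    thus thesis using that cocycle_value_outside0 cocycle_value_outside1 by blast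
  next
    case nonvanishing
    note w = ext1_nonvanishing_witnesses[OF this]
    have "cocycle_value \<Delta> v (witness0 D E k) = 0"
      if "v \<in> sec_poly q n D" "outside1 E k v" for v
      using cocycle_value_chain[OF that(1) w(4) w(1)] cocycle_value_outside1[OF that(1) w(4) that(2) w(5)]
        assms[OF nonvanishing] by simp
    thus thesis using that[OF w(1)] cocycle_value_outside0 w(1,2) by blast
  next
    case no0
    obtain b where "b \<in> sec_poly q n D" "(\<exists>p\<in>sec_poly q n D. outside1 E k p) \<longrightarrow> outside1 E k b"
      using sec_poly_nonempty by blast
    thus thesis using that no0 cocycle_value_outside1 by blast
  next
    case no1
    obtain b where "b \<in> sec_poly q n D" "(\<exists>p\<in>sec_poly q n D. outside0 E k p) \<longrightarrow> outside0 E k b"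
      using sec_poly_nonempty by blast
    thus thesis using that no1 cocycle_value_outside0 by blast
  qed
qed

lemma cocycle_potential:
  assumes "ext1_nonvanishing D E k \<Longrightarrow> cocycle_value \<Delta> (witness1 D E k) (witness0 D E k) = 0"
  obtains a where "\<forall>v\<in>sec_poly q n D. ladd v k \<notin> sec_poly q n E \<longrightarrow> a v = 0"
    "\<And>v w m. v \<in> sec_poly q n D \<Longrightarrow> w \<in> sec_poly q n D \<Longrightarrow> dominates m v \<Longrightarrow> dominates m w \<Longrightarrow>
       \<Delta> v w m = a v - a w"
proof -
  obtain b where b: "b \<in> sec_poly q n D"
    "\<And>v. v \<in> sec_poly q n D \<Longrightarrow> outside0 E k v \<or> outside1 E k v \<Longrightarrow> cocycle_value \<Delta> v b = 0"
    using cocycle_base_point[OF assms] by blast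
  have "\<Delta> v w m = cocycle_value \<Delta> v b - cocycle_value \<Delta> w b"
    if "v \<in> sec_poly q n D" "w \<in> sec_poly q n D" "dominates m v" "dominates m w" for v w m
    using cocycle_value_eq[OF that] cocycle_value_chain[OF that(1) b(1) that(2)]
      cocycle_value_antisym[OF b(1) that(2)] by simp
  with b show thesis
    by (intro that[of "\<lambda>v. cocycle_value \<Delta> v b"]) (auto simp: not_in_sec_poly_iff)
qed

lemma cocycle_value_half_planes:
  assumes p1: "p1 \<in> sec_poly q n D" "outside1 E k p1" and p0: "p0 \<in> sec_poly q n D" "outside0 E k p0"
  shows "cocycle_value \<Delta> p1 p0 =
           (if ext1_nonvanishing D E k then cocycle_value \<Delta> (witness1 D E k) (witness0 D E k) else 0)"
proof (cases "ext1_nonvanishing D E k")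
  case True
  note w = ext1_nonvanishing_witnesses[OF True]
  have "cocycle_value \<Delta> p1 p0 = cocycle_value \<Delta> p1 (witness1 D E k)
      + (cocycle_value \<Delta> (witness1 D E k) (witness0 D E k) + cocycle_value \<Delta> (witness0 D E k) p0)"
    using cocycle_value_chain[OF p1(1) w(4) p0(1)] cocycle_value_chain[OF w(4) w(1) p0(1)] by simp
  thus ?thesis
    using cocycle_value_outside1[OF p1(1) w(4) p1(2) w(5)] cocycle_value_outside0[OF w(1) p0(1) w(2) p0(2)] True
    by simp
next
  case False
  then obtain p where p: "p \<in> sec_poly q n D" "outside0 E k p" "outside1 E k p"
    using p0 p1 unfolding ext1_nonvanishing_def by blast
  show ?thesis
    using cocycle_value_chain[OF p1(1) p(1) p0(1)] False
      cocycle_value_outside1[OF p1(1) p(1) p1(2) p(3)] cocycle_value_outside0[OF p(1) p0(1) p(2) p0(2)]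
    by simp
qed

end

lemma cocycle_diff_eq_basis_hom:
  assumes \<phi>: "fhom q n (syz q n D) (Gamma q n E) k \<phi>" and \<psi>: "fhom q n (syz q n D) (Gamma q n E) k \<psi>"
    and a: "\<And>v w m. v \<in> sec_poly q n D \<Longrightarrow> w \<in> sec_poly q n D \<Longrightarrow> dominates m v \<Longrightarrow> dominates m w \<Longrightarrow>
             syz_coeff \<phi> k v w m - syz_coeff \<psi> k v w m = a v - a w"
    and x: "x \<in> syz q n D"
  shows "esub (\<phi> x) (\<psi> x) = basis_hom k a x"
  using x
proof (induction rule: syz_induct)
  case zero
  show ?case using fhom_free_zero[OF \<phi> free_zero_in_syz] fhom_free_zero[OF \<psi> free_zero_in_syz]
    by (simp add: basis_hom_free_zero esub_def ezero_def)
next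
  case (binom x c v w m)
  let ?b = "binom_syz c v w m"
  have b: "?b \<in> syz q n D" using binom.hyps(3-6) by (rule binom_syz_in_syz)
  have "esub (\<phi> (free_add x ?b)) (\<psi> (free_add x ?b)) = eadd (esub (\<phi> x) (\<psi> x)) (esub (\<phi> ?b) (\<psi> ?b))"
    unfolding fhomD(2)[OF \<phi> binom.hyps(1) b] fhomD(2)[OF \<psi> binom.hyps(1) b]
    by (simp add: esub_def eadd_def fun_eq_iff)
  also have "esub (\<phi> ?b) (\<psi> ?b) = basis_hom k a ?b"
    unfolding cocycle_binom_syz[OF \<phi> binom.hyps(3-6)] cocycle_binom_syz[OF \<psi> binom.hyps(3-6)]
      basis_hom_binom_syz[OF binom.hyps(2)] a[OF binom.hyps(3-6), symmetric]
    by (rule ext) (simp add: esub_def monom_def right_diff_distrib)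
  also have "eadd (esub (\<phi> x) (\<psi> x)) (basis_hom k a ?b) = basis_hom k a (free_add x ?b)"
    using binom.IH basis_hom_free_add[of x D ?b] binom.hyps(1) b by (simp add: syz_def)
  finally show ?case .
qed

definition ext1_invariant :: "divisor \<Rightarrow> divisor \<Rightarrow> lat \<Rightarrow> (fre \<Rightarrow> elt) \<Rightarrow> complex" where
  "ext1_invariant D E k \<phi> =
     (if ext1_nonvanishing D E k then cocycle_value (syz_coeff \<phi> k) (witness1 D E k) (witness0 D E k) else 0)"

lemma fhom_free_basis_outside:
  assumes "fhom q n (free_mod q n D) (Gamma q n E) k \<chi>" "p \<in> sec_poly q n D" "ladd p k \<notin> sec_poly q n E"
  shows "\<chi> (free_basis p) = ezero"
proof -
  have e: "free_basis p \<in> free_mod q n D" by (rule free_basis_in_free_mod[OF assms(2)])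
  have "\<chi> (free_basis p) \<in> Gamma q n E" by (rule fhomD(1)[OF assms(1) e])
  hence "\<chi> (free_basis p) (ladd p k) = 0" using assms(3) by (auto simp: Gamma_def span_on_def supp_def)
  with homog_eq_monom[OF fhomD(4)[OF assms(1) e free_basis_homog]] show ?thesis
    by (simp add: monom_def ezero_def)
qed

lemma fhom_free_binom_syz_outside:
  assumes \<chi>: "fhom q n (free_mod q n D) (Gamma q n E) k \<chi>"
    and "v \<in> sec_poly q n D" "w \<in> sec_poly q n D" "dominates m v" "dominates m w"
    and "ladd v k \<notin> sec_poly q n E" "ladd w k \<notin> sec_poly q n E"
  shows "\<chi> (binom_syz c v w m) = ezero"
proof -
  have "\<chi> (free_act (monom c' (lsub m u)) (free_basis u)) = ezero"
    if "u \<in> sec_poly q n D" "dominates m u" "ladd u k \<notin> sec_poly q n E" for c' u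
  proof -
    have "lsub m u \<in> sigma_dual q n" using that(2) by (simp add: dominates_def)
    hence "\<chi> (free_act (monom c' (lsub m u)) (free_basis u)) = cmul (monom c' (lsub m u)) (\<chi> (free_basis u))"
      using free_basis_in_free_mod[OF that(1)] by (intro fhomD(3)[OF \<chi>] monom_in_Rring)
    thus ?thesis using fhom_free_basis_outside[OF \<chi> that(1,3)] by simp
  qed
  moreover have "free_act (monom c' (lsub m u)) (free_basis u) \<in> free_mod q n D"
    if "u \<in> sec_poly q n D" "dominates m u" for c' u
    using that by (intro free_act_monom_in_free_mod free_basis_in_free_mod) (simp_all add: dominates_def)
  ultimately show ?thesis
    unfolding binom_syz_def using assms(2-7) fhomD(2)[OF \<chi>] by (simp add: eadd_def ezero_def)
qed

lemma ext1_rel_imp_invariant_eq: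
  assumes \<phi>: "fhom q n (syz q n D) (Gamma q n E) k \<phi>" and \<psi>: "fhom q n (syz q n D) (Gamma q n E) k \<psi>"
    and rel: "ext1_rel q n D E k \<phi> \<psi>"
  shows "ext1_invariant D E k \<phi> = ext1_invariant D E k \<psi>"
proof (cases "ext1_nonvanishing D E k")
  case True
  note w = ext1_nonvanishing_witnesses[OF True]
  let ?p0 = "witness0 D E k" and ?p1 = "witness1 D E k"
  let ?b = "binom_syz 1 ?p1 ?p0 (dominator ?p1 ?p0)"
  obtain \<chi> where \<chi>: "fhom q n (free_mod q n D) (Gamma q n E) k \<chi>"
    and eq: "\<forall>x\<in>syz q n D. esub (\<phi> x) (\<psi> x) = \<chi> x"
    using rel unfolding ext1_rel_def by blast
  have "esub (\<phi> ?b) (\<psi> ?b) = ezero"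
    using eq binom_syz_in_syz[OF w(4,1) dominator] w
      fhom_free_binom_syz_outside[OF \<chi> w(4,1) dominator] by (simp add: not_in_sec_poly_iff)
  from fun_cong[OF this, of "ladd (dominator ?p1 ?p0) k"]
  have "syz_coeff \<phi> k ?p1 ?p0 (dominator ?p1 ?p0) = syz_coeff \<psi> k ?p1 ?p0 (dominator ?p1 ?p0)"
    by (simp add: syz_coeff_def esub_def ezero_def)
  thus ?thesis using True by (simp add: ext1_invariant_def cocycle_value_def)
qed (simp add: ext1_invariant_def)

lemma invariant_eq_imp_ext1_rel:
  assumes \<phi>: "fhom q n (syz q n D) (Gamma q n E) k \<phi>" and \<psi>: "fhom q n (syz q n D) (Gamma q n E) k \<psi>"
    and inv: "ext1_invariant D E k \<phi> = ext1_invariant D E k \<psi>"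
  shows "ext1_rel q n D E k \<phi> \<psi>"
proof -
  let ?\<Delta> = "\<lambda>v w m. syz_coeff \<phi> k v w m - syz_coeff \<psi> k v w m"
  have cocycle: "syz_cocycle D E k ?\<Delta>"
    by (rule syz_cocycle_diff[OF syz_cocycle_syz_coeff[OF \<phi>] syz_cocycle_syz_coeff[OF \<psi>]])
  have "cocycle_value ?\<Delta> (witness1 D E k) (witness0 D E k) = 0" if "ext1_nonvanishing D E k"
    using inv that by (simp add: ext1_invariant_def cocycle_value_def)
  then obtain a where a0: "\<forall>v\<in>sec_poly q n D. ladd v k \<notin> sec_poly q n E \<longrightarrow> a v = 0"
    and a1: "\<And>v w m. v \<in> sec_poly q n D \<Longrightarrow> w \<in> sec_poly q n D \<Longrightarrow> dominates m v \<Longrightarrow> dominates m w \<Longrightarrow>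
               ?\<Delta> v w m = a v - a w"
    using cocycle_potential[OF cocycle] by blast
  show ?thesis unfolding ext1_rel_def
    using basis_hom_fhom_free[OF a0] cocycle_diff_eq_basis_hom[OF \<phi> \<psi> a1] by blast
qed

lemma ext1_rel_iff_invariant_eq:
  "fhom q n (syz q n D) (Gamma q n E) k \<phi> \<Longrightarrow> fhom q n (syz q n D) (Gamma q n E) k \<psi> \<Longrightarrow>
     ext1_rel q n D E k \<phi> \<psi> \<longleftrightarrow> ext1_invariant D E k \<phi> = ext1_invariant D E k \<psi>"
  using ext1_rel_imp_invariant_eq invariant_eq_imp_ext1_rel by blast

text \<open>Restricted to K, the homomorphism defined by this weight is a cocycle with invariant c,
  although for c \<noteq> 0 it does not map F into Gamma(E).\<close>

definition half_plane_weight :: "divisor \<Rightarrow> lat \<Rightarrow> complex \<Rightarrow> lat \<Rightarrow> complex" where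
  "half_plane_weight E k c v = (if outside1 E k v then c else 0)"

lemma fhom_half_plane_cocycle:
  assumes "ext1_nonvanishing D E k \<or> c = 0"
  shows "fhom q n (syz q n D) (Gamma q n E) k (basis_hom k (half_plane_weight E k c))"
proof (rule basis_hom_fhom_syz)
  fix m assume "ladd m k \<notin> sec_poly q n E"
  hence m: "outside0 E k m \<or> outside1 E k m" by (simp add: not_in_sec_poly_iff)
  have "half_plane_weight E k c v = (if outside1 E k m then c else 0)"
    if v: "v \<in> sec_poly q n D" "dominates m v" for v
  proof (cases "c = 0 \<or> outside1 E k m")
    case True
    thus ?thesis using outside1_dominated[OF v(2)] by (auto simp: half_plane_weight_def)
  next
    case False
    hence "outside0 E k v" using m outside0_dominated[OF v(2)] by blast
    hence "\<not> outside1 E k v" using False assms v(1) unfolding ext1_nonvanishing_def by blast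
    thus ?thesis using False by (simp add: half_plane_weight_def)
  qed
  thus "\<exists>c'. \<forall>v\<in>sec_poly q n D. dominates m v \<longrightarrow> half_plane_weight E k c v = c'" by blast
qed

lemma ext1_invariant_half_plane_cocycle:
  assumes "ext1_nonvanishing D E k"
  shows "ext1_invariant D E k (basis_hom k (half_plane_weight E k c)) = c"
proof -
  note w = ext1_nonvanishing_witnesses[OF assms]
  have "witness1 D E k \<noteq> witness0 D E k" using w by metis
  thus ?thesis using assms w
    by (simp add: ext1_invariant_def cocycle_value_def syz_coeff_def basis_hom_binom_syz monom_def
        half_plane_weight_def)
qed

lemma ext1_invariant_hadd:
  "ext1_invariant D E k (hadd \<phi> \<psi>) = ext1_invariant D E k \<phi> + ext1_invariant D E k \<psi>"
  by (simp add: ext1_invariant_def cocycle_value_def syz_coeff_def hadd_def eadd_def)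

lemma ext1_invariant_zero: "ext1_invariant D E k (\<lambda>_. ezero) = 0"
  by (simp add: ext1_invariant_def cocycle_value_def syz_coeff_def ezero_def)

lemma ext1_invariant_hact:
  assumes \<phi>: "fhom q n (syz q n D) (Gamma q n E) k \<phi>" and r: "r \<in> Rring q n" "homog r u"
    and nonvanishing: "ext1_nonvanishing D E (ladd k u)"
  shows "ext1_invariant D E (ladd k u) (hact r \<phi>) = r u * ext1_invariant D E k \<phi>"
proof (cases "r u = 0")
  case True
  thus ?thesis using homog_zero_at_degree[OF r(2)] by (simp add: hact_ezero ext1_invariant_zero)
next
  case False
  note ru = Rring_homogD[OF r False]
  note w = ext1_nonvanishing_witnesses[OF nonvanishing]
  let ?P0 = "witness0 D E (ladd k u)" and ?P1 = "witness1 D E (ladd k u)"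
  have "ext1_invariant D E (ladd k u) (hact r \<phi>) = r u * cocycle_value (syz_coeff \<phi> k) ?P1 ?P0"
    using nonvanishing by (subst ru(1)) (simp add: ext1_invariant_def cocycle_value_def syz_coeff_hact_monom)
  also have "cocycle_value (syz_coeff \<phi> k) ?P1 ?P0 = ext1_invariant D E k \<phi>"
    using cocycle_value_half_planes[OF syz_cocycle_syz_coeff[OF \<phi>] w(4)
        outside1_shift[OF ru(2) w(5)] w(1) outside0_shift[OF ru(2) w(2)]]
    by (simp add: ext1_invariant_def)
  finally show ?thesis .
qed

lemma half_plane_cocycle_of_invariant:
  fixes \<phi> :: "fre \<Rightarrow> elt"
  assumes "ext1_nonvanishing D E k \<longleftrightarrow> ext1_nonvanishing D' E' k"
  defines "\<phi>' \<equiv> basis_hom k (half_plane_weight E' k (ext1_invariant D E k \<phi>))"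
  shows "fhom q n (syz q n D') (Gamma q n E') k \<phi>'"
    and "ext1_invariant D' E' k \<phi>' = ext1_invariant D E k \<phi>"
proof -
  show "fhom q n (syz q n D') (Gamma q n E') k \<phi>'"
    unfolding \<phi>'_def using assms(1)
    by (intro fhom_half_plane_cocycle) (auto simp: ext1_invariant_def)
  show "ext1_invariant D' E' k \<phi>' = ext1_invariant D E k \<phi>"
    unfolding \<phi>'_def using assms(1) ext1_invariant_half_plane_cocycle
    by (cases "ext1_nonvanishing D' E' k") (auto simp: ext1_invariant_def)
qed

theorem ext1_graded_iso_if_nonvanishing_iff:
  assumes nonvanishing_iff: "\<And>k. ext1_nonvanishing D1 D2 k \<longleftrightarrow> ext1_nonvanishing D3 D4 k"
  shows "ext1_graded_iso q n D1 D2 D3 D4"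
proof -
  define \<Phi> where "\<Phi> k \<phi> = basis_hom k (half_plane_weight D4 k (ext1_invariant D1 D2 k \<phi>))" for k \<phi>
  note \<Phi>_fhom = half_plane_cocycle_of_invariant(1)[OF nonvanishing_iff, folded \<Phi>_def]
  note \<Phi>_invariant = half_plane_cocycle_of_invariant(2)[OF nonvanishing_iff, folded \<Phi>_def]
  note rel_iff = ext1_rel_iff_invariant_eq
  show ?thesis
    unfolding ext1_graded_iso_def ext1_cocyc_def Ball_def Bex_def mem_Collect_eq
  proof (intro exI[of _ \<Phi>] allI conjI ballI impI)
    fix k \<phi> \<psi> assume "fhom q n (syz q n D1) (Gamma q n D2) k \<phi>" "fhom q n (syz q n D1) (Gamma q n D2) k \<psi>"
    thus "ext1_rel q n D1 D2 k \<phi> \<psi> \<longleftrightarrow> ext1_rel q n D3 D4 k (\<Phi> k \<phi>) (\<Phi> k \<psi>)"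
      by (simp add: rel_iff \<Phi>_fhom \<Phi>_invariant)
    show "ext1_rel q n D3 D4 k (\<Phi> k (hadd \<phi> \<psi>)) (hadd (\<Phi> k \<phi>) (\<Phi> k \<psi>))"
      by (simp add: rel_iff \<Phi>_fhom fhom_hadd \<Phi>_invariant ext1_invariant_hadd)
  next
    fix k \<chi> assume \<chi>: "fhom q n (syz q n D3) (Gamma q n D4) k \<chi>"
    let ?\<phi> = "basis_hom k (half_plane_weight D2 k (ext1_invariant D3 D4 k \<chi>))"
    have "fhom q n (syz q n D1) (Gamma q n D2) k ?\<phi>" "ext1_invariant D1 D2 k ?\<phi> = ext1_invariant D3 D4 k \<chi>"
      using half_plane_cocycle_of_invariant[OF nonvanishing_iff[symmetric]] by blast+
    thus "\<exists>\<phi>. fhom q n (syz q n D1) (Gamma q n D2) k \<phi> \<and> ext1_rel q n D3 D4 k (\<Phi> k \<phi>) \<chi>"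
      using \<chi> by (auto simp: rel_iff \<Phi>_fhom \<Phi>_invariant)
  next
    fix k u r \<phi> assume r: "r \<in> Rring q n" "homog r u" and \<phi>: "fhom q n (syz q n D1) (Gamma q n D2) k \<phi>"
    have "ext1_invariant D1 D2 (ladd k u) (hact r \<phi>) = ext1_invariant D3 D4 (ladd k u) (hact r (\<Phi> k \<phi>))"
    proof (cases "ext1_nonvanishing D3 D4 (ladd k u)")
      case True
      thus ?thesis using ext1_invariant_hact[OF \<phi> r] ext1_invariant_hact[OF \<Phi>_fhom r] nonvanishing_iff
        by (simp add: \<Phi>_invariant)
    qed (use nonvanishing_iff in \<open>simp add: ext1_invariant_def\<close>)
    thus "ext1_rel q n D3 D4 (ladd k u) (\<Phi> (ladd k u) (hact r \<phi>)) (hact r (\<Phi> k \<phi>))"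
      by (simp add: rel_iff \<Phi>_fhom fhom_hact[OF \<Phi>_fhom r] \<Phi>_invariant)
  qed (rule \<Phi>_fhom)
qed

subsection \<open>Duality\<close>

lemma outside0_canonical_minus:
  "outside0 (div_sub canonical E) k p \<longleftrightarrow> fst p + fst k \<le> fst E"
  by (simp add: outside0_def div_sub_def canonical_def)

lemma outside1_canonical_minus:
  "outside1 (div_sub canonical E) k p \<longleftrightarrow> ell1 (ladd p k) \<le> snd E"
  by (simp add: outside1_def div_sub_def canonical_def)

lemma dual_outside0_point:
  assumes "p \<in> sec_poly q n D" "outside0 (div_sub canonical D') k p"
  shows "\<exists>p'\<in>sec_poly q n D'. outside0 (div_sub canonical D) k p'"
proof -
  define c where "c = - snd D' + ell1 p + ell1 k"
  have c: "c \<le> n * \<bar>c\<bar>" by (rule le_mult_of_abs_le[OF n_pos]) simp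
  define p' where "p' = (- fst p - fst k, - snd p - snd k + \<bar>c\<bar>)"
  have "p' \<in> sec_poly q n D'" "outside0 (div_sub canonical D) k p'"
    using assms c by (simp_all add: sec_poly_iff outside0_canonical_minus p'_def c_def algebra_simps)
  thus ?thesis by blast
qed

lemma dual_outside1_point:
  assumes "p \<in> sec_poly q n D" "outside1 (div_sub canonical D') k p"
  shows "\<exists>p'\<in>sec_poly q n D'. outside1 (div_sub canonical D) k p'"
proof -
  define t where "t = \<bar>- fst D' + fst p + fst k\<bar>"
  have t: "- fst D' + fst p + fst k \<le> n * t" by (rule le_mult_of_abs_le[OF n_pos]) (simp add: t_def)
  define p' where "p' = (- fst p - fst k + t * n, - snd p - snd k + t * q)"
  have "p' \<in> sec_poly q n D'" "outside1 (div_sub canonical D) k p'"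
    using assms t by (simp_all add: sec_poly_iff outside1_canonical_minus p'_def algebra_simps)
  thus ?thesis by blast
qed

lemma dual_outside_both_point:
  assumes "p \<in> sec_poly q n D" "outside0 (div_sub canonical D') k p" "outside1 (div_sub canonical D') k p"
  shows "\<exists>p'\<in>sec_poly q n D'. outside0 (div_sub canonical D) k p' \<and> outside1 (div_sub canonical D) k p'"
proof -
  define p' where "p' = (- fst p - fst k, - snd p - snd k)"
  have "p' \<in> sec_poly q n D'" "outside0 (div_sub canonical D) k p'" "outside1 (div_sub canonical D) k p'"
    using assms
    by (simp_all add: sec_poly_iff outside0_canonical_minus outside1_canonical_minus p'_def algebra_simps)
  thus ?thesis by blast
qed

lemma ext1_nonvanishing_dual_imp:
  assumes "ext1_nonvanishing D (div_sub canonical D') k"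
  shows "ext1_nonvanishing D' (div_sub canonical D) k"
proof -
  obtain p0 p1 where p0: "p0 \<in> sec_poly q n D" "outside0 (div_sub canonical D') k p0"
    and p1: "p1 \<in> sec_poly q n D" "outside1 (div_sub canonical D') k p1"
    using assms unfolding ext1_nonvanishing_def by blast
  have "\<not> (\<exists>p\<in>sec_poly q n D'. outside0 (div_sub canonical D) k p \<and> outside1 (div_sub canonical D) k p)"
    using assms dual_outside_both_point[of _ D' D k] unfolding ext1_nonvanishing_def by blast
  thus ?thesis using dual_outside0_point[OF p0] dual_outside1_point[OF p1]
    unfolding ext1_nonvanishing_def by blast
qed

lemma ext1_nonvanishing_dual:
  "ext1_nonvanishing D (div_sub canonical D') k \<longleftrightarrow> ext1_nonvanishing D' (div_sub canonical D) k"
  using ext1_nonvanishing_dual_imp by blast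

end

theorem mainTheorem1:
  fixes q n :: int and D D' :: divisor
  assumes "0 < q" and "q < n" and "coprime q n"
  shows "ext1_graded_iso q n D (div_sub canonical D') D' (div_sub canonical D)"
proof -
  interpret cyclic_quotient q n by unfold_locales (use assms in simp)
  show ?thesis by (rule ext1_graded_iso_if_nonvanishing_iff[OF ext1_nonvanishing_dual])
qed

end
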